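(* Let $\varepsilon>0$ and $R,R'>\varepsilon$. Let $(E,d)$ be a metric space whose Borel $\sigma$-algebra makes it a standard Borel space, let $\nu$ be a Radon (probability) measure on it, and let $A\subset\mathrm{Supp}(\nu)$ be closed. If the MaxEnt posterior of $(\nu,A)$ with truncation parameter $R$ exists and equals $\mu^\star$, then the MaxEnt posterior of $(\nu,A)$ with truncation parameter $R'$ also exists and equals $\mu^\star$.
   Context: For a truncation parameter $r>0$: for each $\sigma>0$ consider the problem $\inf_\mu\{\mathrm{Ent}_\nu(\mu):\mu(E)=1,\ \int_E d_r(x,A)^2\,d\mu(x)\le\sigma^2\}$, where $d(x,A)=\inf_{y\in A}d(x,y)$, $d_r=\min(d,r)$, and $\mathrm{Ent}_\nu(\mu)=\int\frac{d\mu}{d\nu}\ln\frac{d\mu}{d\nu}\,d\nu$ if $\mu\ll\nu$, $+\infty$ otherwise. If for every $\sigma>0$ the infimum is attained by a unique measure $\mu_\sigma$ and $\mu_\sigma$ converges weakly as $\sigma\to0$, its limit is the MaxEnt posterior of $(\nu,A)$ with truncation parameter $r$. $\mathrm{Supp}(\nu)$ is the complement of the union of all $\nu$-null open sets. *)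

theory Defs
  imports "HOL-Probability.Probability"
begin

definition standard_borel_space :: "'a::metric_space itself \<Rightarrow> bool" where
  "standard_borel_space _ \<longleftrightarrow>
     (\<exists>T :: 'a topology. topspace T = UNIV \<and> completely_metrizable_space T \<and>
        separable_space T \<and> sigma_sets UNIV {S. openin T S} = sets (borel :: 'a measure))"

definition borel_prob :: "'a::metric_space measure \<Rightarrow> bool" where
  "borel_prob \<mu> \<longleftrightarrow> sets \<mu> = sets (borel :: 'a measure) \<and> prob_space \<mu>"

definition radon_prob :: "'a::metric_space measure \<Rightarrow> bool" where
  "radon_prob \<nu> \<longleftrightarrow> borel_prob \<nu> \<and>
     (\<forall>B \<in> sets (borel :: 'a measure).
        emeasure \<nu> B = (SUP K \<in> {K. compact K \<and> K \<subseteq> B}. emeasure \<nu> K))"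

definition Supp :: "'a::metric_space measure \<Rightarrow> 'a set" where
  "Supp \<nu> = - \<Union>{U. open U \<and> emeasure \<nu> U = 0}"

text \<open>Truncated distance d_r(x,A) = min(d(x,A), r), with d(x,{}) = +infinity.\<close>
definition trunc_dist :: "real \<Rightarrow> 'a::metric_space set \<Rightarrow> 'a \<Rightarrow> real" where
  "trunc_dist r A x = (if A = {} then r else min (infdist x A) r)"

text \<open>Relative entropy Ent_nu(mu) = integral of f ln f d nu, f = d mu / d nu,
  if mu << nu, and +infinity otherwise (the negative part is bounded by 1/e).\<close>
definition rel_entropy :: "'a measure \<Rightarrow> 'a measure \<Rightarrow> ereal" where
  "rel_entropy \<nu> \<mu> =
     (if absolutely_continuous \<nu> \<mu> then
        (let g = (\<lambda>x. let f = enn2real (RN_deriv \<nu> \<mu> x) in f * ln f) in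
          enn2ereal (\<integral>\<^sup>+ x. ennreal (max 0 (g x)) \<partial>\<nu>)
          - enn2ereal (\<integral>\<^sup>+ x. ennreal (max 0 (- g x)) \<partial>\<nu>))
      else \<infinity>)"

definition maxent_feasible :: "real \<Rightarrow> 'a::metric_space set \<Rightarrow> real \<Rightarrow> 'a measure \<Rightarrow> bool" where
  "maxent_feasible r A \<sigma> \<mu> \<longleftrightarrow> borel_prob \<mu> \<and>
     (\<integral> x. (trunc_dist r A x)\<^sup>2 \<partial>\<mu>) \<le> \<sigma>\<^sup>2"

definition maxent_minimizer ::
  "'a::metric_space measure \<Rightarrow> 'a set \<Rightarrow> real \<Rightarrow> real \<Rightarrow> 'a measure \<Rightarrow> bool" where
  "maxent_minimizer \<nu> A r \<sigma> \<mu> \<longleftrightarrow> maxent_feasible r A \<sigma> \<mu> \<and>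
     (\<forall>\<mu>'. maxent_feasible r A \<sigma> \<mu>' \<longrightarrow> rel_entropy \<nu> \<mu> \<le> rel_entropy \<nu> \<mu>')"

definition weak_conv_filter ::
  "('i \<Rightarrow> 'a::metric_space measure) \<Rightarrow> 'a measure \<Rightarrow> 'i filter \<Rightarrow> bool" where
  "weak_conv_filter M \<mu> F \<longleftrightarrow>
     (\<forall>f :: 'a \<Rightarrow> real. continuous_on UNIV f \<and> bounded (range f) \<longrightarrow>
        ((\<lambda>i. \<integral> x. f x \<partial>(M i)) \<longlongrightarrow> (\<integral> x. f x \<partial>\<mu>)) F)"

definition maxent_posterior ::
  "'a::metric_space measure \<Rightarrow> 'a set \<Rightarrow> real \<Rightarrow> 'a measure \<Rightarrow> bool" where
  "maxent_posterior \<nu> A r \<mu> \<longleftrightarrow>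
     (\<forall>\<sigma>>0. \<exists>!m. maxent_minimizer \<nu> A r \<sigma> m) \<and> borel_prob \<mu> \<and>
     weak_conv_filter (\<lambda>\<sigma>. THE m. maxent_minimizer \<nu> A r \<sigma> m) \<mu> (at_right 0)"

end

(* For sigma > 0 the constrained minimizer is a Gibbs measure exp (- l V) / Z l * nu, where
   V = d_r(., A)^2 and the multiplier l >= 0 makes the constraint tight (or is 0 when the constraint
   is slack): t ln t lies above its tangent at the Gibbs density, and the multiplier exists by the
   intermediate value theorem since the mean energy of the Gibbs measure is continuous in l and
   tends to 0 (this uses A <= Supp nu). Consequently the posterior is the weak limit of the Gibbs
   measures as l -> infinity. For two truncations the potentials agree on {d(., A) < min r r'} and
   both are at least c = (min r r')^2 elsewhere, so the two Gibbs measures integrate a bounded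
   function to within O(exp (- l c) / Z l), which is O(exp (- l c / 2)) because
   Z l >= nu {V < c / 2} exp (- l c / 2). *)

theory Submission
  imports Defs "HOL-Real_Asymp.Real_Asymp"
begin

lemma mult_ln_ge_tangent:
  fixes t a :: real
  assumes "0 \<le> t" "0 < a"
  shows "t * (1 + ln a) - a \<le> t * ln t"
proof (cases "t = 0")
  case False
  then have t: "0 < t" using assms by simp
  have "ln (a / t) \<le> a / t - 1" using t assms by (intro ln_le_minus_one) simp
  then have "t * ln (a / t) \<le> t * (a / t - 1)" using t by (intro mult_left_mono) auto
  moreover have "t * ln (a / t) = t * ln a - t * ln t" using t assms by (simp add: ln_div algebra_simps)
  moreover have "t * (a / t - 1) = a - t" using t by (simp add: field_simps)
  ultimately show ?thesis by (simp add: algebra_simps)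
qed (use assms in simp)

lemma mult_ln_eq_tangent_imp_eq:
  fixes t a :: real
  assumes "0 \<le> t" "0 < a" and eq: "t * ln t = t * (1 + ln a) - a"
  shows "t = a"
proof (cases "t = 0")
  case False
  then have t: "0 < t" using assms by simp
  have "t * ln (a / t) = t * ln a - t * ln t" using t assms by (simp add: ln_div algebra_simps)
  moreover have "t * (a / t - 1) = a - t" using t by (simp add: field_simps)
  ultimately have "t * ln (a / t) = t * (a / t - 1)" using eq by (simp add: algebra_simps)
  then have "ln (a / t) = a / t - 1" using t by simp
  then have "a / t = 1" using t assms by (intro ln_eq_minus_one) auto
  then show ?thesis using t by simp
qed (use assms in simp)

lemma abs_exp_neg_mult_diff_le:
  fixes a b v :: real
  assumes "0 \<le> a" "0 \<le> b" "0 \<le> v"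
  shows "\<bar>exp (- a * v) - exp (- b * v)\<bar> \<le> v * \<bar>a - b\<bar>"
proof -
  have *: "\<bar>exp (- a * v) - exp (- b * v)\<bar> \<le> v * (b - a)" if "0 \<le> a" "a \<le> b" for a b
  proof -
    define y where "y = 1 - exp (- ((b - a) * v))"
    have "exp (- a * v) - exp (- b * v) = exp (- a * v) * y"
      by (simp add: y_def algebra_simps exp_add[symmetric])
    moreover have "0 \<le> y" "y \<le> (b - a) * v"
      using that assms(3) exp_ge_add_one_self[of "- ((b - a) * v)"] by (auto simp: y_def)
    moreover have "exp (- a * v) \<le> 1"
      using that assms(3) by simp
    ultimately have "0 \<le> exp (- a * v) - exp (- b * v)" "exp (- a * v) - exp (- b * v) \<le> (b - a) * v"
      using mult_left_le_one_le[of y "exp (- a * v)"] by auto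
    then show ?thesis by (simp add: mult.commute)
  qed
  show ?thesis
    using *[of a b] *[of b a] assms by (cases "a \<le> b") (auto simp: abs_minus_commute)
qed

lemma (in prob_space) abs_integral_diff_le:
  fixes f h :: "'a \<Rightarrow> real"
  assumes "integrable M f" "integrable M h" "\<And>x. \<bar>f x - h x\<bar> \<le> K"
  shows "\<bar>(\<integral> x. f x \<partial>M) - (\<integral> x. h x \<partial>M)\<bar> \<le> K"
proof -
  have "\<bar>(\<integral> x. f x \<partial>M) - (\<integral> x. h x \<partial>M)\<bar> \<le> (\<integral> x. \<bar>f x - h x\<bar> \<partial>M)"
    using integral_norm_bound[of M "\<lambda>x. f x - h x"] assms(1,2) by simp
  also have "\<dots> \<le> (\<integral> x. K \<partial>M)"
    using assms by (intro integral_mono) auto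
  finally show ?thesis by (simp add: prob_space)
qed

lemma abs_divide_diff_divide_le:
  fixes a b Z1 Z2 B e :: real
  assumes "0 < Z1" "0 < Z2" "0 \<le> B" "\<bar>a - b\<bar> \<le> B * e" "\<bar>Z1 - Z2\<bar> \<le> e" "\<bar>b\<bar> \<le> B * Z2"
  shows "\<bar>a / Z1 - b / Z2\<bar> \<le> 2 * B * e / Z1"
proof -
  have "a / Z1 - b / Z2 = ((a - b) + b / Z2 * (Z2 - Z1)) / Z1"
    using assms(1,2) by (simp add: field_simps)
  moreover have "\<bar>b / Z2 * (Z2 - Z1)\<bar> \<le> B * e"
  proof -
    have "\<bar>b / Z2\<bar> \<le> B" using assms(2,6) by (simp add: abs_divide pos_divide_le_eq)
    then have "\<bar>b / Z2\<bar> * \<bar>Z2 - Z1\<bar> \<le> B * e"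
      using assms(3,5) by (intro mult_mono) (auto simp: abs_minus_commute)
    then show ?thesis by (simp only: abs_mult)
  qed
  ultimately show ?thesis
    using assms(1,4) abs_triangle_ineq[of "a - b" "b / Z2 * (Z2 - Z1)"]
    by (simp add: abs_divide divide_right_mono)
qed

lemma nn_integral_ennreal_less_top:
  fixes f :: "'a \<Rightarrow> real"
  assumes "integrable M f"
  shows "(\<integral>\<^sup>+ x. ennreal (f x) \<partial>M) < \<infinity>"
proof -
  have "(\<integral>\<^sup>+ x. ennreal (f x) \<partial>M) \<le> (\<integral>\<^sup>+ x. ennreal (norm (f x)) \<partial>M)"
    by (intro nn_integral_mono ennreal_leI) auto
  also have "\<dots> < \<infinity>" using assms by (simp add: integrable_iff_bounded)
  finally show ?thesis .
qed

lemma nn_integral_neg_part_add_less_top: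
  fixes h T :: "'a \<Rightarrow> real"
  assumes "\<And>x. 0 \<le> h x" "integrable M T"
  shows "(\<integral>\<^sup>+ x. ennreal (max 0 (- (h x + T x))) \<partial>M) < \<infinity>"
proof -
  have "(\<integral>\<^sup>+ x. ennreal (max 0 (- (h x + T x))) \<partial>M) \<le> (\<integral>\<^sup>+ x. ennreal (- T x) \<partial>M)"
    using assms(1) by (intro nn_integral_mono) (auto intro: ennreal_leI)
  also have "\<dots> < \<infinity>" using assms(2) by (intro nn_integral_ennreal_less_top) simp
  finally show ?thesis .
qed

lemma nn_integral_pos_part_add_eq_top:
  fixes h T :: "'a \<Rightarrow> real"
  assumes h: "h \<in> borel_measurable M" "\<And>x. 0 \<le> h x" "(\<integral>\<^sup>+ x. ennreal (h x) \<partial>M) = \<infinity>"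
    and T: "integrable M T"
  shows "(\<integral>\<^sup>+ x. ennreal (max 0 (h x + T x)) \<partial>M) = \<infinity>"
proof -
  have T_measurable[measurable]: "T \<in> borel_measurable M" using T by auto
  have "(\<integral>\<^sup>+ x. ennreal (h x) \<partial>M) \<le> (\<integral>\<^sup>+ x. ennreal (max 0 (h x + T x)) + ennreal (- T x) \<partial>M)"
  proof (intro nn_integral_mono)
    fix x
    have "ennreal (h x) \<le> ennreal (max 0 (h x + T x) + max 0 (- T x))"
      by (intro ennreal_leI) linarith
    then show "ennreal (h x) \<le> ennreal (max 0 (h x + T x)) + ennreal (- T x)"
      by (simp add: ennreal_plus ennreal_max_0)
  qed
  also have "\<dots> = (\<integral>\<^sup>+ x. ennreal (max 0 (h x + T x)) \<partial>M) + (\<integral>\<^sup>+ x. ennreal (- T x) \<partial>M)"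
    using h by (intro nn_integral_add) auto
  finally show ?thesis
    using h(3) nn_integral_ennreal_less_top[of M "\<lambda>x. - T x"] T
    by (auto simp: top_unique ennreal_add_eq_top)
qed

lemma nn_integral_pos_neg_split:
  fixes h T :: "'a \<Rightarrow> real"
  assumes h: "h \<in> borel_measurable M" "\<And>x. 0 \<le> h x" and T: "integrable M T"
  shows "enn2ereal (\<integral>\<^sup>+ x. ennreal (max 0 (h x + T x)) \<partial>M)
           - enn2ereal (\<integral>\<^sup>+ x. ennreal (max 0 (- (h x + T x))) \<partial>M)
         = enn2ereal (\<integral>\<^sup>+ x. ennreal (h x) \<partial>M) + ereal (\<integral> x. T x \<partial>M)"
proof (cases "integrable M h")
  case True
  then have hT: "integrable M (\<lambda>x. h x + T x)" using T by simp
  have fin: "enn2ereal X = ereal (enn2real X)" if "X < \<infinity>" for X :: ennreal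
    using that by (cases X rule: ennreal_cases) auto
  have "(\<integral>\<^sup>+ x. ennreal (h x + T x) \<partial>M) < \<infinity>"
    using hT by (rule nn_integral_ennreal_less_top)
  moreover have "(\<integral>\<^sup>+ x. ennreal (- (h x + T x)) \<partial>M) < \<infinity>"
    using hT by (intro nn_integral_ennreal_less_top integrable_minus)
  ultimately have "ereal (\<integral> x. h x + T x \<partial>M)
      = enn2ereal (\<integral>\<^sup>+ x. ennreal (max 0 (h x + T x)) \<partial>M)
        - enn2ereal (\<integral>\<^sup>+ x. ennreal (max 0 (- (h x + T x))) \<partial>M)"
    using real_lebesgue_integral_def[OF hT] by (simp add: fin)
  moreover have "(\<integral>\<^sup>+ x. ennreal (h x) \<partial>M) = ennreal (\<integral> x. h x \<partial>M)"
    using True h by (intro nn_integral_eq_integral) auto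
  moreover have "0 \<le> (\<integral> x. h x \<partial>M)" using h by simp
  ultimately show ?thesis using True T by (simp add: enn2ereal_ennreal)
next
  case False
  then have h_top: "(\<integral>\<^sup>+ x. ennreal (h x) \<partial>M) = \<infinity>"
    using h by (simp add: integrable_iff_bounded less_top[symmetric])
  have "(\<integral>\<^sup>+ x. ennreal (max 0 (- (h x + T x))) \<partial>M) < \<infinity>"
    using h(2) T by (rule nn_integral_neg_part_add_less_top)
  then show ?thesis
    using nn_integral_pos_part_add_eq_top[OF h h_top T] h_top
    by (cases "(\<integral>\<^sup>+ x. ennreal (max 0 (- (h x + T x))) \<partial>M)" rule: ennreal_cases) auto
qed

lemma rel_entropy_eq_split:
  fixes h T :: "'a \<Rightarrow> real"
  assumes ac: "absolutely_continuous \<nu> \<mu>"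
    and h: "h \<in> borel_measurable \<nu>" "\<And>x. 0 \<le> h x" and T: "integrable \<nu> T"
    and split: "AE x in \<nu>. enn2real (RN_deriv \<nu> \<mu> x) * ln (enn2real (RN_deriv \<nu> \<mu> x)) = h x + T x"
  shows "rel_entropy \<nu> \<mu> = enn2ereal (\<integral>\<^sup>+ x. ennreal (h x) \<partial>\<nu>) + ereal (\<integral> x. T x \<partial>\<nu>)"
proof -
  let ?\<phi> = "\<lambda>x. enn2real (RN_deriv \<nu> \<mu> x) * ln (enn2real (RN_deriv \<nu> \<mu> x))"
  have "(\<integral>\<^sup>+ x. ennreal (max 0 (?\<phi> x)) \<partial>\<nu>) = (\<integral>\<^sup>+ x. ennreal (max 0 (h x + T x)) \<partial>\<nu>)"
    "(\<integral>\<^sup>+ x. ennreal (max 0 (- ?\<phi> x)) \<partial>\<nu>) = (\<integral>\<^sup>+ x. ennreal (max 0 (- (h x + T x))) \<partial>\<nu>)"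
    using split by (auto intro!: nn_integral_cong_AE)
  then show ?thesis
    unfolding rel_entropy_def Let_def using ac nn_integral_pos_neg_split[OF h T] by simp
qed

lemma (in sigma_finite_measure) prob_density_RN_deriv:
  assumes N: "prob_space N" "absolutely_continuous M N" "sets N = sets M"
  defines "f \<equiv> \<lambda>x. enn2real (RN_deriv M N x)"
  shows "integrable M f" "(\<integral> x. f x \<partial>M) = 1" "N = density M (\<lambda>x. ennreal (f x))"
proof -
  interpret N: prob_space N by (rule N(1))
  have sf: "sigma_finite_measure N" by unfold_locales
  have "integrable N (\<lambda>_. 1::real)" by simp
  then show "integrable M f"
    using RN_deriv_integrable[OF sf N(2,3), of "\<lambda>_. 1"] by (simp add: f_def)
  show "(\<integral> x. f x \<partial>M) = 1"
    using RN_deriv_integral[OF sf N(2,3), of "\<lambda>_. 1"] N.prob_space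
    by (simp add: f_def)
  have "AE x in M. RN_deriv M N x = ennreal (f x)"
    using RN_deriv_finite[OF sf N(2,3)] by eventually_elim (simp add: f_def less_top)
  then have "density M (RN_deriv M N) = density M (\<lambda>x. ennreal (f x))"
    by (intro density_cong) (auto simp: f_def)
  then show "N = density M (\<lambda>x. ennreal (f x))" using density_RN_deriv[OF N(2,3)] by simp
qed

section \<open>Gibbs measures of the truncated squared distance\<close>

locale maxent_gibbs = prob_space M for M :: "'a::metric_space measure" +
  fixes r :: real and A :: "'a set"
  assumes sets_eq_borel: "sets M = sets borel"
    and r_pos: "0 < r" and A_nonempty: "A \<noteq> {}" and closed_A: "closed A"
    and A_subset_Supp: "A \<subseteq> Supp M"
begin

definition V :: "'a \<Rightarrow> real" where "V x = (trunc_dist r A x)\<^sup>2"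
definition Z :: "real \<Rightarrow> real" where "Z l = (\<integral> x. exp (- l * V x) \<partial>M)"
definition N :: "real \<Rightarrow> real" where "N l = (\<integral> x. V x * exp (- l * V x) \<partial>M)"
definition energy :: "real \<Rightarrow> real" where "energy l = N l / Z l"
definition gibbs_dens :: "real \<Rightarrow> 'a \<Rightarrow> real" where "gibbs_dens l x = exp (- l * V x) / Z l"
definition gibbs :: "real \<Rightarrow> 'a measure" where "gibbs l = density M (\<lambda>x. ennreal (gibbs_dens l x))"

lemma space_eq_UNIV: "space M = UNIV"
  using sets_eq_imp_space_eq[OF sets_eq_borel] by simp

lemma measurable_from_borel: "f \<in> borel_measurable borel \<Longrightarrow> f \<in> borel_measurable M"
  by (subst measurable_cong_sets[OF sets_eq_borel refl])

lemma trunc_dist_eq: "trunc_dist r A x = min (infdist x A) r"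
  using A_nonempty by (simp add: trunc_dist_def)

lemma continuous_V: "continuous_on UNIV V"
  unfolding V_def[abs_def] trunc_dist_eq by (intro continuous_intros)

lemma V_measurable[measurable]: "V \<in> borel_measurable M"
  using continuous_V by (intro measurable_from_borel borel_measurable_continuous_onI)

lemma V_nonneg: "0 \<le> V x"
  by (simp add: V_def)

lemma V_le: "V x \<le> r\<^sup>2"
  unfolding V_def trunc_dist_eq using r_pos infdist_nonneg[of x A] by (intro power_mono) auto

lemma V_eq_0_iff: "V x = 0 \<longleftrightarrow> x \<in> A"
  unfolding V_def trunc_dist_eq
  using r_pos in_closed_iff_infdist_zero[OF closed_A A_nonempty, of x] by (auto simp: min_def)

lemma integrable_exp_V: "0 \<le> l \<Longrightarrow> integrable M (\<lambda>x. exp (- l * V x))"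
  by (rule integrable_const_bound[where B=1]) (use V_nonneg in auto)

lemma integrable_V_mult: "integrable M f \<Longrightarrow> integrable M (\<lambda>x. V x * f x)"
  by (rule Bochner_Integration.integrable_bound[where f="\<lambda>x. r\<^sup>2 * f x"])
    (use V_le V_nonneg in \<open>auto simp: abs_mult intro!: mult_right_mono\<close>)

lemma integrable_V_exp_V: "0 \<le> l \<Longrightarrow> integrable M (\<lambda>x. V x * exp (- l * V x))"
  by (intro integrable_V_mult integrable_exp_V)

lemma Z_ge_measure: "0 \<le> l \<Longrightarrow> measure M {x. V x < c} * exp (- l * c) \<le> Z l"
proof -
  assume l: "0 \<le> l"
  let ?S = "{x. V x < c}"
  have S: "?S \<in> sets M"
    using measurable_sets[OF V_measurable, of "{..<c}"] by (simp add: space_eq_UNIV vimage_def)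
  have "measure M ?S * exp (- l * c) = (\<integral> x. indicator ?S x * exp (- l * c) \<partial>M)"
    using S by simp
  also have "\<dots> \<le> Z l"
    unfolding Z_def using S l
    by (intro integral_mono integrable_exp_V integrable_mult_left integrable_real_indicator)
      (auto simp: indicator_def emeasure_eq_measure intro: mult_left_mono)
  finally show ?thesis .
qed

lemma Z_pos: "0 \<le> l \<Longrightarrow> 0 < Z l"
proof -
  assume "0 \<le> l"
  then have "measure M {x. V x < r\<^sup>2 + 1} * exp (- l * (r\<^sup>2 + 1)) \<le> Z l" by (rule Z_ge_measure)
  moreover have "V x < r\<^sup>2 + 1" for x using V_le[of x] by linarith
  then have "{x. V x < r\<^sup>2 + 1} = space M" by (auto simp: space_eq_UNIV)
  ultimately show ?thesis using prob_space by (simp add: less_le_trans[OF exp_gt_zero])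
qed

lemma measure_sublevel_pos: "0 < c \<Longrightarrow> 0 < measure M {x. V x < c}"
proof -
  assume "0 < c"
  obtain a where a: "a \<in> A" using A_nonempty by auto
  have "open {x. V x < c}"
    using continuous_V by (intro open_Collect_less) (auto intro: continuous_intros)
  moreover have "a \<in> {x. V x < c}" using a V_eq_0_iff[of a] \<open>0 < c\<close> by simp
  moreover have "a \<in> Supp M" using a A_subset_Supp by auto
  ultimately have "emeasure M {x. V x < c} \<noteq> 0" unfolding Supp_def by blast
  then show ?thesis by (simp add: emeasure_eq_measure zero_less_measure_iff)
qed

lemma exp_divide_Z_le:
  assumes l: "0 \<le> l" and c: "0 < c"
  shows "exp (- l * c) / Z l \<le> exp (- l * c / 2) / measure M {x. V x < c / 2}"
proof -
  define p where "p = measure M {x. V x < c / 2}"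
  have p: "0 < p" using measure_sublevel_pos[of "c / 2"] c by (simp add: p_def)
  have "exp (- l * c) / Z l \<le> exp (- l * c) / (p * exp (- l * (c / 2)))"
    using Z_ge_measure[OF l, of "c / 2"] p Z_pos[OF l] by (intro divide_left_mono mult_pos_pos) (auto simp: p_def)
  also have "\<dots> = exp (- l * c / 2) / p"
  proof -
    have "exp (- l * c) = exp (- l * (c / 2)) * exp (- l * c / 2)" by (simp add: exp_add[symmetric])
    then show ?thesis using p by (simp add: field_simps)
  qed
  finally show ?thesis by (simp add: p_def)
qed

lemma gibbs_dens_pos: "0 \<le> l \<Longrightarrow> 0 < gibbs_dens l x"
  using Z_pos by (simp add: gibbs_dens_def)

lemma gibbs_dens_measurable[measurable]: "gibbs_dens l \<in> borel_measurable M"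
  unfolding gibbs_dens_def[abs_def] by measurable

lemma integrable_gibbs_dens: "0 \<le> l \<Longrightarrow> integrable M (gibbs_dens l)"
  using integrable_exp_V unfolding gibbs_dens_def[abs_def] by simp

lemma integral_gibbs_dens: "0 \<le> l \<Longrightarrow> (\<integral> x. gibbs_dens l x \<partial>M) = 1"
  using Z_pos[of l] by (simp add: gibbs_dens_def Z_def)

lemma ln_gibbs_dens: "0 \<le> l \<Longrightarrow> ln (gibbs_dens l x) = - l * V x - ln (Z l)"
  using Z_pos[of l] by (simp add: gibbs_dens_def ln_div)

lemma integral_gibbs:
  "0 \<le> l \<Longrightarrow> f \<in> borel_measurable M \<Longrightarrow> (\<integral> x. f x \<partial>gibbs l) = (\<integral> x. gibbs_dens l x * f x \<partial>M)"
  unfolding gibbs_def using gibbs_dens_pos[of l] by (subst integral_density) (auto intro: less_imp_le)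

lemma integral_gibbs_eq_divide:
  "0 \<le> l \<Longrightarrow> f \<in> borel_measurable M \<Longrightarrow> (\<integral> x. f x \<partial>gibbs l) = (\<integral> x. exp (- l * V x) * f x \<partial>M) / Z l"
  by (simp add: integral_gibbs gibbs_dens_def)

lemma
  assumes l: "0 \<le> l" and f: "f \<in> borel_measurable M" "\<And>x. \<bar>f x\<bar> \<le> B"
  shows integrable_exp_V_mult: "integrable M (\<lambda>x. exp (- l * V x) * f x)"
    and abs_integral_exp_V_mult_le: "\<bar>\<integral> x. exp (- l * V x) * f x \<partial>M\<bar> \<le> B * Z l"
proof -
  have bound: "\<bar>exp (- l * V x) * f x\<bar> \<le> B * exp (- l * V x)" for x
    using f(2)[of x] by (simp add: abs_mult mult.commute mult_right_mono)
  have "integrable M (\<lambda>x. B * exp (- l * V x))" using integrable_exp_V[OF l] by simp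
  then show int: "integrable M (\<lambda>x. exp (- l * V x) * f x)"
  proof (rule Bochner_Integration.integrable_bound)
    show "(\<lambda>x. exp (- l * V x) * f x) \<in> borel_measurable M" using f(1) by measurable
    show "AE x in M. norm (exp (- l * V x) * f x) \<le> norm (B * exp (- l * V x))"
      using bound by (intro AE_I2) (simp add: order_trans[OF _ abs_ge_self])
  qed
  have "\<bar>\<integral> x. exp (- l * V x) * f x \<partial>M\<bar> \<le> (\<integral> x. \<bar>exp (- l * V x) * f x\<bar> \<partial>M)"
    by (rule integral_abs_bound)
  also have "\<dots> \<le> (\<integral> x. B * exp (- l * V x) \<partial>M)"
    using int integrable_exp_V[OF l] bound by (intro integral_mono) auto
  finally show "\<bar>\<integral> x. exp (- l * V x) * f x \<partial>M\<bar> \<le> B * Z l" by (simp add: Z_def)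
qed

lemma integral_V_gibbs: "0 \<le> l \<Longrightarrow> (\<integral> x. V x \<partial>gibbs l) = energy l"
  by (simp add: integral_gibbs gibbs_dens_def energy_def N_def mult.commute)

lemma borel_prob_gibbs: "0 \<le> l \<Longrightarrow> borel_prob (gibbs l)"
proof -
  assume l: "0 \<le> l"
  have "emeasure (gibbs l) (space (gibbs l)) = (\<integral>\<^sup>+ x. ennreal (gibbs_dens l x) \<partial>M)"
    unfolding gibbs_def by (simp add: emeasure_density)
  also have "\<dots> = 1"
    using l gibbs_dens_pos[OF l] integrable_gibbs_dens[OF l] integral_gibbs_dens[OF l]
    by (subst nn_integral_eq_integral) (auto intro: less_imp_le)
  finally show ?thesis
    unfolding borel_prob_def gibbs_def using sets_eq_borel by (auto intro: prob_spaceI)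
qed

lemma absolutely_continuous_gibbs: "absolutely_continuous M (gibbs l)"
  unfolding gibbs_def by (rule absolutely_continuousI_density) measurable

lemma RN_deriv_gibbs: "0 \<le> l \<Longrightarrow> AE x in M. enn2real (RN_deriv M (gibbs l) x) = gibbs_dens l x"
proof -
  assume l: "0 \<le> l"
  have "AE x in M. ennreal (gibbs_dens l x) = RN_deriv M (gibbs l) x"
    unfolding gibbs_def by (rule RN_deriv_unique) auto
  then show ?thesis
    by eventually_elim (metis enn2real_ennreal gibbs_dens_pos[OF l] less_imp_le)
qed

section \<open>Gibbs measures minimize the entropy\<close>

definition entropy_gap :: "real \<Rightarrow> 'a \<Rightarrow> real \<Rightarrow> real" where
  "entropy_gap l x t = t * ln t - (t * (1 + ln (gibbs_dens l x)) - gibbs_dens l x)"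

lemma entropy_gap_nonneg:
  assumes "0 \<le> l" "0 \<le> t" shows "0 \<le> entropy_gap l x t"
  using mult_ln_ge_tangent[OF assms(2) gibbs_dens_pos[OF assms(1), of x]] by (simp add: entropy_gap_def)

lemma entropy_gap_eq_0_iff:
  assumes "0 \<le> l" "0 \<le> t" shows "entropy_gap l x t = 0 \<longleftrightarrow> t = gibbs_dens l x"
  using mult_ln_eq_tangent_imp_eq[OF assms(2) gibbs_dens_pos[OF assms(1), of x]]
  by (auto simp: entropy_gap_def algebra_simps)

lemma rel_entropy_eq_gap:
  assumes l: "0 \<le> l" and \<mu>: "borel_prob \<mu>" "absolutely_continuous M \<mu>"
  shows "rel_entropy M \<mu> =
    enn2ereal (\<integral>\<^sup>+ x. ennreal (entropy_gap l x (enn2real (RN_deriv M \<mu> x))) \<partial>M)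
      + ereal (- l * (\<integral> x. V x \<partial>\<mu>) - ln (Z l))"
proof -
  define f where "f x = enn2real (RN_deriv M \<mu> x)" for x
  have sets: "sets \<mu> = sets M" and "prob_space \<mu>"
    using \<mu>(1) sets_eq_borel by (auto simp: borel_prob_def)
  note f = prob_density_RN_deriv[OF this(2) \<mu>(2) sets, folded f_def]
  have f_measurable[measurable]: "f \<in> borel_measurable M"
    using f(1) by auto
  have V_f: "(\<integral> x. V x \<partial>\<mu>) = (\<integral> x. V x * f x \<partial>M)"
    using RN_deriv_integral[OF prob_space_imp_sigma_finite[OF \<open>prob_space \<mu>\<close>] \<mu>(2) sets, of V]
    by (simp add: f_def mult.commute)
  define T where "T x = f x * (1 + ln (gibbs_dens l x)) - gibbs_dens l x" for x
  \<comment> \<open>the tangent part is affine in \<open>f\<close> and \<open>V * f\<close>, so it integrates explicitly\<close>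
  have T_eq: "T = (\<lambda>x. f x - l * (V x * f x) - ln (Z l) * f x - gibbs_dens l x)"
    by (auto simp: T_def ln_gibbs_dens[OF l] algebra_simps)
  have T_int: "integrable M T"
    unfolding T_eq using f(1) integrable_V_mult[OF f(1)] integrable_gibbs_dens[OF l] by simp
  have "(\<integral> x. T x \<partial>M) = - l * (\<integral> x. V x \<partial>\<mu>) - ln (Z l)"
    unfolding T_eq V_f using f integrable_V_mult[OF f(1)] integrable_gibbs_dens[OF l]
      integral_gibbs_dens[OF l] by simp
  moreover have "rel_entropy M \<mu> =
      enn2ereal (\<integral>\<^sup>+ x. ennreal (entropy_gap l x (f x)) \<partial>M) + ereal (\<integral> x. T x \<partial>M)"
  proof (rule rel_entropy_eq_split[OF \<mu>(2) _ _ T_int])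
    show "(\<lambda>x. entropy_gap l x (f x)) \<in> borel_measurable M"
      unfolding entropy_gap_def by measurable
    show "0 \<le> entropy_gap l x (f x)" for x
      using entropy_gap_nonneg[OF l] by (simp add: f_def)
    have "f x * ln (f x) = entropy_gap l x (f x) + T x" for x
      by (simp add: entropy_gap_def T_def)
    then show "AE x in M. enn2real (RN_deriv M \<mu> x) * ln (enn2real (RN_deriv M \<mu> x))
        = entropy_gap l x (f x) + T x"
      by (simp add: f_def)
  qed
  ultimately show ?thesis by (simp add: f_def)
qed

lemma rel_entropy_gibbs: "0 \<le> l \<Longrightarrow> rel_entropy M (gibbs l) = ereal (- l * energy l - ln (Z l))"
proof -
  assume l: "0 \<le> l"
  have "AE x in M. entropy_gap l x (enn2real (RN_deriv M (gibbs l) x)) = 0"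
    using RN_deriv_gibbs[OF l] by eventually_elim (simp add: entropy_gap_def algebra_simps)
  then have "(\<integral>\<^sup>+ x. ennreal (entropy_gap l x (enn2real (RN_deriv M (gibbs l) x))) \<partial>M) = (\<integral>\<^sup>+ x. 0 \<partial>M)"
    by (intro nn_integral_cong_AE) auto
  then show ?thesis
    using rel_entropy_eq_gap[OF l borel_prob_gibbs[OF l] absolutely_continuous_gibbs]
    by (simp add: integral_V_gibbs[OF l] zero_ennreal.rep_eq)
qed

lemma eq_gibbs_if_entropy_gap_integral_eq_0:
  assumes l: "0 \<le> l" and \<mu>: "borel_prob \<mu>" "absolutely_continuous M \<mu>"
    and gap: "(\<integral>\<^sup>+ x. ennreal (entropy_gap l x (enn2real (RN_deriv M \<mu> x))) \<partial>M) = 0"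
  shows "\<mu> = gibbs l"
proof -
  define f where "f x = enn2real (RN_deriv M \<mu> x)" for x
  have "(\<lambda>x. entropy_gap l x (f x)) \<in> borel_measurable M"
    unfolding entropy_gap_def f_def by measurable
  then have "AE x in M. ennreal (entropy_gap l x (f x)) = 0"
    using gap by (subst (asm) nn_integral_0_iff_AE) (auto simp: f_def)
  then have "AE x in M. entropy_gap l x (f x) = 0"
  proof eventually_elim
    case (elim x)
    then show ?case using entropy_gap_nonneg[OF l, of "f x" x] by (simp add: f_def)
  qed
  then have "AE x in M. f x = gibbs_dens l x"
    by eventually_elim (simp add: entropy_gap_eq_0_iff[OF l] f_def)
  then have "density M (\<lambda>x. ennreal (f x)) = gibbs l"
    unfolding gibbs_def by (intro density_cong) (auto simp: f_def)
  moreover have "prob_space \<mu>" "sets \<mu> = sets M"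
    using \<mu>(1) sets_eq_borel by (auto simp: borel_prob_def)
  ultimately show ?thesis
    using prob_density_RN_deriv(3)[OF _ \<mu>(2)] by (simp add: f_def)
qed

lemma rel_entropy_ge_gibbs_add_gap:
  assumes l: "0 \<le> l" and tight: "l = 0 \<or> energy l = \<sigma>\<^sup>2"
    and feasible: "maxent_feasible r A \<sigma> \<mu>" and ac: "absolutely_continuous M \<mu>"
  shows "enn2ereal (\<integral>\<^sup>+ x. ennreal (entropy_gap l x (enn2real (RN_deriv M \<mu> x))) \<partial>M)
      + rel_entropy M (gibbs l) \<le> rel_entropy M \<mu>"
proof -
  have \<mu>: "borel_prob \<mu>" and "(\<integral> x. V x \<partial>\<mu>) \<le> \<sigma>\<^sup>2"
    using feasible by (auto simp: maxent_feasible_def V_def)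
  then have "- l * energy l \<le> - l * (\<integral> x. V x \<partial>\<mu>)"
    using tight l by (auto intro: mult_left_mono)
  then show ?thesis
    unfolding rel_entropy_eq_gap[OF l \<mu> ac] rel_entropy_gibbs[OF l] by (intro add_left_mono) simp
qed

lemma rel_entropy_gibbs_le:
  assumes l: "0 \<le> l" and tight: "l = 0 \<or> energy l = \<sigma>\<^sup>2" and feasible: "maxent_feasible r A \<sigma> \<mu>"
  shows "rel_entropy M (gibbs l) \<le> rel_entropy M \<mu>"
    and "rel_entropy M \<mu> \<le> rel_entropy M (gibbs l) \<Longrightarrow> \<mu> = gibbs l"
proof -
  define H where "H = (\<integral>\<^sup>+ x. ennreal (entropy_gap l x (enn2real (RN_deriv M \<mu> x))) \<partial>M)"
  have not_ac: "rel_entropy M \<mu> = \<infinity>" if "\<not> absolutely_continuous M \<mu>"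
    using that by (simp add: rel_entropy_def)
  have ge: "enn2ereal H + rel_entropy M (gibbs l) \<le> rel_entropy M \<mu>" if "absolutely_continuous M \<mu>"
    unfolding H_def using rel_entropy_ge_gibbs_add_gap[OF l tight feasible that] .
  show "rel_entropy M (gibbs l) \<le> rel_entropy M \<mu>"
  proof (cases "absolutely_continuous M \<mu>")
    case True
    then show ?thesis using ge add_increasing[OF enn2ereal_nonneg order_refl] order_trans by blast
  qed (simp add: not_ac)
  assume le: "rel_entropy M \<mu> \<le> rel_entropy M (gibbs l)"
  then have ac: "absolutely_continuous M \<mu>"
    using not_ac rel_entropy_gibbs[OF l] by force
  have "H = 0"
    using order_trans[OF ge[OF ac] le] unfolding rel_entropy_gibbs[OF l]
    by (cases H rule: ennreal_cases) auto
  moreover have "borel_prob \<mu>" using feasible by (simp add: maxent_feasible_def)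
  ultimately show "\<mu> = gibbs l"
    using eq_gibbs_if_entropy_gap_integral_eq_0[OF l _ ac] by (simp add: H_def)
qed

lemma maxent_minimizer_gibbs:
  assumes l: "0 \<le> l" and "energy l \<le> \<sigma>\<^sup>2" and tight: "l = 0 \<or> energy l = \<sigma>\<^sup>2"
  shows "maxent_minimizer M A r \<sigma> (gibbs l)"
    and "maxent_minimizer M A r \<sigma> \<mu> \<Longrightarrow> \<mu> = gibbs l"
proof -
  have feasible: "maxent_feasible r A \<sigma> (gibbs l)"
    using integral_V_gibbs[OF l] borel_prob_gibbs[OF l] assms(2)
    by (simp add: maxent_feasible_def V_def)
  then show "maxent_minimizer M A r \<sigma> (gibbs l)"
    using rel_entropy_gibbs_le(1)[OF l tight] by (simp add: maxent_minimizer_def)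
  show "\<mu> = gibbs l" if "maxent_minimizer M A r \<sigma> \<mu>"
    using that feasible rel_entropy_gibbs_le(2)[OF l tight] by (simp add: maxent_minimizer_def)
qed

section \<open>The mean energy as a function of the multiplier\<close>

lemma continuous_on_Z: "continuous_on {0..} Z"
proof (rule lipschitz_on_continuous_on)
  show "(r\<^sup>2)-lipschitz_on {0..} Z"
  proof (rule lipschitz_onI)
    fix a b :: real assume "a \<in> {0..}" "b \<in> {0..}"
    then have "\<bar>Z a - Z b\<bar> \<le> r\<^sup>2 * \<bar>a - b\<bar>"
      unfolding Z_def
    proof (intro abs_integral_diff_le integrable_exp_V)
      fix x
      have "\<bar>exp (- a * V x) - exp (- b * V x)\<bar> \<le> V x * \<bar>a - b\<bar>"
        using \<open>a \<in> {0..}\<close> \<open>b \<in> {0..}\<close> V_nonneg by (intro abs_exp_neg_mult_diff_le) auto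
      also have "\<dots> \<le> r\<^sup>2 * \<bar>a - b\<bar>"
        using V_le by (intro mult_right_mono) auto
      finally show "\<bar>exp (- a * V x) - exp (- b * V x)\<bar> \<le> r\<^sup>2 * \<bar>a - b\<bar>" .
    qed (use \<open>a \<in> {0..}\<close> \<open>b \<in> {0..}\<close> in auto)
    then show "dist (Z a) (Z b) \<le> r\<^sup>2 * dist a b" by (simp add: dist_real_def)
  qed simp
qed

lemma continuous_on_N: "continuous_on {0..} N"
proof (rule lipschitz_on_continuous_on)
  show "(r\<^sup>2 * r\<^sup>2)-lipschitz_on {0..} N"
  proof (rule lipschitz_onI)
    fix a b :: real assume ab: "a \<in> {0..}" "b \<in> {0..}"
    have "\<bar>V x * exp (- a * V x) - V x * exp (- b * V x)\<bar> \<le> r\<^sup>2 * (r\<^sup>2 * \<bar>a - b\<bar>)" for x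
    proof -
      have "\<bar>V x * exp (- a * V x) - V x * exp (- b * V x)\<bar> = V x * \<bar>exp (- a * V x) - exp (- b * V x)\<bar>"
        using V_nonneg[of x] by (simp add: abs_mult right_diff_distrib[symmetric])
      also have "\<dots> \<le> r\<^sup>2 * (r\<^sup>2 * \<bar>a - b\<bar>)"
      proof (intro mult_mono)
        show "\<bar>exp (- a * V x) - exp (- b * V x)\<bar> \<le> r\<^sup>2 * \<bar>a - b\<bar>"
          using abs_exp_neg_mult_diff_le[of a b "V x"] ab V_nonneg[of x]
            mult_right_mono[OF V_le[of x], of "\<bar>a - b\<bar>"] by auto
      qed (auto simp: V_le V_nonneg)
      finally show ?thesis .
    qed
    then have "\<bar>N a - N b\<bar> \<le> r\<^sup>2 * r\<^sup>2 * \<bar>a - b\<bar>"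
      unfolding N_def using ab
      by (intro abs_integral_diff_le integrable_V_exp_V) (auto simp: mult.assoc)
    then show "dist (N a) (N b) \<le> r\<^sup>2 * r\<^sup>2 * dist a b" by (simp add: dist_real_def)
  qed simp
qed

lemma continuous_on_energy: "continuous_on {0..} energy"
  unfolding energy_def[abs_def]
  using Z_pos by (intro continuous_on_divide continuous_on_N continuous_on_Z) (auto simp: less_imp_neq[symmetric])

lemma N_le:
  assumes "0 \<le> l" "0 \<le> c"
  shows "N l \<le> c * Z l + r\<^sup>2 * exp (- l * c)"
proof -
  have "V x * exp (- l * V x) \<le> c * exp (- l * V x) + r\<^sup>2 * exp (- l * c)" for x
  proof (cases "V x \<le> c")
    case True
    moreover have "0 \<le> r\<^sup>2 * exp (- l * c)" by simp
    ultimately show ?thesis using mult_right_mono[OF True exp_ge_zero, of "- l * V x"] by linarith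
  next
    case False
    then have "exp (- l * V x) \<le> exp (- l * c)" using assms(1) by (simp add: mult_left_mono)
    then have "V x * exp (- l * V x) \<le> r\<^sup>2 * exp (- l * c)"
      using V_le[of x] V_nonneg[of x] by (intro mult_mono) auto
    moreover have "0 \<le> c * exp (- l * V x)" using assms(2) by simp
    ultimately show ?thesis by linarith
  qed
  moreover have "integrable M (\<lambda>x. c * exp (- l * V x) + r\<^sup>2 * exp (- l * c))"
    using integrable_exp_V[OF assms(1)] by simp
  ultimately have "N l \<le> (\<integral> x. c * exp (- l * V x) + r\<^sup>2 * exp (- l * c) \<partial>M)"
    unfolding N_def using assms(1) by (intro integral_mono integrable_V_exp_V)
  also have "\<dots> = c * Z l + r\<^sup>2 * exp (- l * c)"
    using integrable_exp_V[OF assms(1)] by (simp add: Z_def prob_space)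
  finally show ?thesis .
qed

lemma energy_le:
  assumes c: "0 < c" and l: "0 \<le> l"
  shows "energy l \<le> c + r\<^sup>2 * exp (- l * c / 2) / measure M {x. V x < c / 2}"
proof -
  have Z: "0 < Z l" using Z_pos[OF l] .
  have "energy l \<le> (c * Z l + r\<^sup>2 * exp (- l * c)) / Z l"
    unfolding energy_def using N_le[OF l] c Z by (simp add: divide_right_mono)
  also have "\<dots> = c + r\<^sup>2 * (exp (- l * c) / Z l)" using Z by (simp add: field_simps)
  also have "\<dots> \<le> c + r\<^sup>2 * (exp (- l * c / 2) / measure M {x. V x < c / 2})"
    using mult_left_mono[OF exp_divide_Z_le[OF l c], of "r\<^sup>2"] by simp
  finally show ?thesis by simp
qed

lemma energy_nonneg: "0 \<le> l \<Longrightarrow> 0 \<le> energy l"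
  unfolding energy_def N_def using Z_pos[of l] V_nonneg by (auto intro!: divide_nonneg_pos)

lemma energy_tendsto_0: "(energy \<longlongrightarrow> 0) at_top"
proof (rule tendstoI)
  fix e :: real assume e: "0 < e"
  define p where "p = measure M {x. V x < e / 2 / 2}"
  have "((\<lambda>l. r\<^sup>2 * exp (- l * (e / 2) / 2) / p) \<longlongrightarrow> 0) at_top"
    using e by (intro tendsto_divide_zero) real_asymp
  then have "\<forall>\<^sub>F l in at_top. r\<^sup>2 * exp (- l * (e / 2) / 2) / p < e / 2"
    using e by (intro order_tendstoD(2)) auto
  moreover have "\<forall>\<^sub>F l in at_top. 0 \<le> (l::real)" by simp
  ultimately show "\<forall>\<^sub>F l in at_top. dist (energy l) 0 < e"
  proof eventually_elim
    case (elim l)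
    then have "energy l < e"
      using energy_le[of "e / 2" l] e unfolding p_def by linarith
    then show ?case using energy_nonneg[OF \<open>0 \<le> l\<close>] by simp
  qed
qed

lemma exists_multiplier:
  assumes "0 < \<sigma>"
  obtains l where "0 \<le> l" "energy l \<le> \<sigma>\<^sup>2" "l = 0 \<or> energy l = \<sigma>\<^sup>2"
proof (cases "energy 0 \<le> \<sigma>\<^sup>2")
  case False
  have "\<forall>\<^sub>F l in at_top. energy l < \<sigma>\<^sup>2"
    using assms by (intro order_tendstoD(2)[OF energy_tendsto_0]) simp
  moreover have "\<forall>\<^sub>F l in at_top. 0 \<le> (l::real)" by simp
  ultimately have "\<forall>\<^sub>F l in at_top. 0 \<le> l \<and> energy l < \<sigma>\<^sup>2" by eventually_elim simp
  then obtain L where L: "0 \<le> L" "energy L < \<sigma>\<^sup>2"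
    by (auto simp: eventually_at_top_linorder)
  have "continuous_on {0..L} energy"
    using continuous_on_energy by (rule continuous_on_subset) auto
  then obtain l where "0 \<le> l" "l \<le> L" "energy l = \<sigma>\<^sup>2"
    using IVT2'[of energy L "\<sigma>\<^sup>2" 0] L False by force
  then show ?thesis using that by simp
qed (use that in auto)

lemma energy_pos:
  assumes "\<not> (AE x in M. x \<in> A)" "0 \<le> l"
  shows "0 < energy l"
proof -
  have "N l \<noteq> 0"
  proof
    assume "N l = 0"
    then have "AE x in M. V x * exp (- l * V x) = 0"
      unfolding N_def using integrable_V_exp_V[OF assms(2)] V_nonneg
      by (subst (asm) integral_nonneg_eq_0_iff_AE) auto
    then have "AE x in M. x \<in> A" by eventually_elim (simp add: V_eq_0_iff)
    then show False using assms(1) by simp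
  qed
  moreover have "0 \<le> N l" unfolding N_def using V_nonneg by simp
  ultimately show ?thesis unfolding energy_def using Z_pos[OF assms(2)] by simp
qed

lemma
  assumes "AE x in M. x \<in> A"
  shows energy_degenerate: "energy l = 0" and gibbs_degenerate: "gibbs l = M"
proof -
  have V0: "AE x in M. V x = 0" using assms by eventually_elim (simp add: V_eq_0_iff)
  then have "N l = 0" unfolding N_def by (intro integral_eq_zero_AE) auto
  then show "energy l = 0" by (simp add: energy_def)
  have "Z l = 1" unfolding Z_def using V0 by (simp add: integral_cong_AE[of _ _ "\<lambda>_. 1"] prob_space)
  have "AE x in M. ennreal (gibbs_dens l x) = 1"
    using V0 by eventually_elim (simp add: gibbs_dens_def \<open>Z l = 1\<close>)
  then have "gibbs l = density M (\<lambda>_. 1)"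
    unfolding gibbs_def by (intro density_cong) auto
  then show "gibbs l = M" by (simp add: density_1)
qed

section \<open>The posterior as a limit of Gibbs measures\<close>

lemma the_maxent_minimizer:
  assumes "0 \<le> l" "energy l \<le> \<sigma>\<^sup>2" "l = 0 \<or> energy l = \<sigma>\<^sup>2"
  shows "(THE \<mu>. maxent_minimizer M A r \<sigma> \<mu>) = gibbs l"
  using maxent_minimizer_gibbs[OF assms] by (rule the_equality)

lemma ex1_maxent_minimizer:
  assumes "0 < \<sigma>" shows "\<exists>!\<mu>. maxent_minimizer M A r \<sigma> \<mu>"
proof -
  obtain l where "0 \<le> l" "energy l \<le> \<sigma>\<^sup>2" "l = 0 \<or> energy l = \<sigma>\<^sup>2"
    using exists_multiplier[OF assms] .
  from maxent_minimizer_gibbs[OF this] show ?thesis by blast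
qed

lemma filterlim_multiplier_at_top:
  assumes nondegenerate: "\<not> (AE x in M. x \<in> A)"
    and \<Lambda>: "\<And>\<sigma>. 0 < \<sigma> \<Longrightarrow> 0 \<le> \<Lambda> \<sigma> \<and> energy (\<Lambda> \<sigma>) \<le> \<sigma>\<^sup>2"
  shows "filterlim \<Lambda> at_top (at_right 0)"
  unfolding filterlim_at_top
proof
  fix K :: real
  have "continuous_on {0..max K 0} energy"
    by (rule continuous_on_subset[OF continuous_on_energy]) auto
  then obtain l0 where l0: "l0 \<in> {0..max K 0}" "\<And>l. l \<in> {0..max K 0} \<Longrightarrow> energy l0 \<le> energy l"
    using continuous_attains_inf[of "{0..max K 0}" energy] by auto
  have pos: "0 < energy l0" using energy_pos[OF nondegenerate] l0(1) by simp
  have "\<forall>\<^sub>F \<sigma> in at_right 0. 0 < \<sigma> \<and> \<sigma> < sqrt (energy l0)"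
    using pos by (auto simp: eventually_at_right_field intro: exI[of _ "sqrt (energy l0)"])
  then show "\<forall>\<^sub>F \<sigma> in at_right 0. K \<le> \<Lambda> \<sigma>"
  proof eventually_elim
    case (elim \<sigma>)
    have "\<sigma>\<^sup>2 < energy l0" using power_strict_mono[of \<sigma> "sqrt (energy l0)" 2] pos elim by simp
    show "K \<le> \<Lambda> \<sigma>"
    proof (rule ccontr)
      assume "\<not> K \<le> \<Lambda> \<sigma>"
      then have "\<Lambda> \<sigma> \<in> {0..max K 0}" using \<Lambda>[of \<sigma>] elim by auto
      then show False using l0(2) \<Lambda>[of \<sigma>] elim \<open>\<sigma>\<^sup>2 < energy l0\<close> by fastforce
    qed
  qed
qed

lemma the_maxent_minimizer_sqrt_energy:
  "0 \<le> l \<Longrightarrow> (THE \<mu>. maxent_minimizer M A r (sqrt (energy l)) \<mu>) = gibbs l"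
  by (simp add: energy_nonneg the_maxent_minimizer)

lemma filterlim_sqrt_energy_at_right:
  assumes "\<not> (AE x in M. x \<in> A)"
  shows "filterlim (\<lambda>l. sqrt (energy l)) (at_right 0) at_top"
proof (rule tendsto_imp_filterlim_at_right)
  show "((\<lambda>l. sqrt (energy l)) \<longlongrightarrow> 0) at_top"
    using tendsto_real_sqrt[OF energy_tendsto_0] by simp
  show "\<forall>\<^sub>F l in at_top. 0 < sqrt (energy l)"
    using eventually_ge_at_top[of "0::real"] by eventually_elim (simp add: energy_pos[OF assms])
qed

lemma obtain_multiplier_function:
  obtains \<Lambda> where "\<And>\<sigma>. 0 < \<sigma> \<Longrightarrow> 0 \<le> \<Lambda> \<sigma> \<and> energy (\<Lambda> \<sigma>) \<le> \<sigma>\<^sup>2"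
    and "\<And>\<sigma>. 0 < \<sigma> \<Longrightarrow> (THE \<mu>. maxent_minimizer M A r \<sigma> \<mu>) = gibbs (\<Lambda> \<sigma>)"
proof -
  have "\<forall>\<sigma>. \<exists>l. 0 < \<sigma> \<longrightarrow> 0 \<le> l \<and> energy l \<le> \<sigma>\<^sup>2 \<and> (l = 0 \<or> energy l = \<sigma>\<^sup>2)"
    by (meson exists_multiplier)
  then obtain \<Lambda> where \<Lambda>:
    "\<And>\<sigma>. 0 < \<sigma> \<Longrightarrow> 0 \<le> \<Lambda> \<sigma> \<and> energy (\<Lambda> \<sigma>) \<le> \<sigma>\<^sup>2 \<and> (\<Lambda> \<sigma> = 0 \<or> energy (\<Lambda> \<sigma>) = \<sigma>\<^sup>2)"
    by metis
  show ?thesis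
    using that \<Lambda> the_maxent_minimizer by blast
qed

lemma tendsto_minimizer_iff_tendsto_gibbs:
  fixes F :: "'a measure \<Rightarrow> 'b::t2_space"
  shows "((\<lambda>\<sigma>. F (THE \<mu>. maxent_minimizer M A r \<sigma> \<mu>)) \<longlongrightarrow> L) (at_right 0)
    \<longleftrightarrow> ((\<lambda>l. F (gibbs l)) \<longlongrightarrow> L) at_top"
proof (cases "AE x in M. x \<in> A")
  case True
  have "\<forall>\<^sub>F \<sigma> in at_right 0. F (THE \<mu>. maxent_minimizer M A r \<sigma> \<mu>) = F M"
    using eventually_at_right_less[of "0::real"]
  proof eventually_elim
    case (elim \<sigma>)
    then show ?case
      using the_maxent_minimizer[of 0 \<sigma>] energy_degenerate[OF True] gibbs_degenerate[OF True] by simp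
  qed
  then have "((\<lambda>\<sigma>. F (THE \<mu>. maxent_minimizer M A r \<sigma> \<mu>)) \<longlongrightarrow> L) (at_right 0) \<longleftrightarrow> F M = L"
    by (simp add: tendsto_cong tendsto_const_iff)
  moreover have "((\<lambda>l. F (gibbs l)) \<longlongrightarrow> L) at_top \<longleftrightarrow> F M = L"
    by (simp add: gibbs_degenerate[OF True] tendsto_const_iff)
  ultimately show ?thesis by simp
next
  case nondegenerate: False
  \<comment> \<open>\<open>\<Lambda>\<close> and \<open>sqrt \<circ> energy\<close> reparametrize the two limits into each other\<close>
  obtain \<Lambda> where \<Lambda>: "\<And>\<sigma>. 0 < \<sigma> \<Longrightarrow> 0 \<le> \<Lambda> \<sigma> \<and> energy (\<Lambda> \<sigma>) \<le> \<sigma>\<^sup>2"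
    and the_\<Lambda>: "\<And>\<sigma>. 0 < \<sigma> \<Longrightarrow> (THE \<mu>. maxent_minimizer M A r \<sigma> \<mu>) = gibbs (\<Lambda> \<sigma>)"
    using obtain_multiplier_function by blast
  have \<Lambda>_lim: "filterlim \<Lambda> at_top (at_right 0)"
    using \<Lambda> by (rule filterlim_multiplier_at_top[OF nondegenerate])
  have "\<forall>\<^sub>F \<sigma> in at_right 0. F (gibbs (\<Lambda> \<sigma>)) = F (THE \<mu>. maxent_minimizer M A r \<sigma> \<mu>)"
    using eventually_at_right_less[of "0::real"] by eventually_elim (simp add: the_\<Lambda>)
  moreover have "\<forall>\<^sub>F l in at_top.
      F (THE \<mu>. maxent_minimizer M A r (sqrt (energy l)) \<mu>) = F (gibbs l)"
    using eventually_ge_at_top[of "0::real"]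
    by eventually_elim (simp add: the_maxent_minimizer_sqrt_energy)
  ultimately show ?thesis
    using filterlim_compose[of "\<lambda>\<sigma>. F (THE \<mu>. maxent_minimizer M A r \<sigma> \<mu>)" "nhds L" "at_right 0",
        OF _ filterlim_sqrt_energy_at_right[OF nondegenerate]]
      filterlim_compose[of "\<lambda>l. F (gibbs l)" "nhds L" at_top, OF _ \<Lambda>_lim]
    by (auto simp: o_def elim!: tendsto_cong[THEN iffD1, rotated])
qed

lemma maxent_posterior_iff_gibbs_limit:
  "maxent_posterior M A r \<mu> \<longleftrightarrow> borel_prob \<mu> \<and> weak_conv_filter gibbs \<mu> at_top"
proof -
  have "weak_conv_filter (\<lambda>\<sigma>. THE \<mu>. maxent_minimizer M A r \<sigma> \<mu>) \<mu> (at_right 0)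
      \<longleftrightarrow> weak_conv_filter gibbs \<mu> at_top"
  proof -
    have "((\<lambda>\<sigma>. \<integral> x. f x \<partial>(THE \<mu>. maxent_minimizer M A r \<sigma> \<mu>)) \<longlongrightarrow> L) (at_right 0)
        \<longleftrightarrow> ((\<lambda>l. \<integral> x. f x \<partial>gibbs l) \<longlongrightarrow> L) at_top" for f :: "'a \<Rightarrow> real" and L
      by (rule tendsto_minimizer_iff_tendsto_gibbs)
    then show ?thesis by (simp add: weak_conv_filter_def)
  qed
  then show ?thesis
    unfolding maxent_posterior_def using ex1_maxent_minimizer by blast
qed

end

section \<open>Changing the truncation parameter\<close>

locale maxent_gibbs_pair = g1: maxent_gibbs M r1 A + g2: maxent_gibbs M r2 A
  for M :: "'a::metric_space measure" and r1 r2 A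
begin

definition V_cut :: real where "V_cut = (min r1 r2)\<^sup>2"

lemma V_cut_pos: "0 < V_cut"
  using g1.r_pos g2.r_pos by (simp add: V_cut_def)

lemma abs_exp_V_diff_le:
  assumes "0 \<le> l"
  shows "\<bar>exp (- l * g1.V x) - exp (- l * g2.V x)\<bar> \<le> exp (- l * V_cut)"
proof (cases "infdist x A < min r1 r2")
  case True
  then have "g1.V x = g2.V x" by (simp add: g1.V_def g2.V_def g1.trunc_dist_eq g2.trunc_dist_eq)
  then show ?thesis by simp
next
  case False
  then have "V_cut \<le> g1.V x" "V_cut \<le> g2.V x"
    unfolding V_cut_def g1.V_def g2.V_def g1.trunc_dist_eq g2.trunc_dist_eq
    using g1.r_pos g2.r_pos by (auto intro!: power_mono)
  then have "exp (- l * g1.V x) \<le> exp (- l * V_cut)" "exp (- l * g2.V x) \<le> exp (- l * V_cut)"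
    using assms by (auto intro: mult_left_mono)
  then show ?thesis
    unfolding abs_le_iff using exp_gt_zero[of "- l * g1.V x"] exp_gt_zero[of "- l * g2.V x"] by linarith
qed

lemma abs_integral_gibbs_diff_le:
  assumes l: "0 \<le> l" and f: "f \<in> borel_measurable M" "\<And>x. \<bar>f x\<bar> \<le> B"
  shows "\<bar>(\<integral> x. f x \<partial>g1.gibbs l) - (\<integral> x. f x \<partial>g2.gibbs l)\<bar>
    \<le> 2 * B * exp (- l * V_cut / 2) / measure M {x. g1.V x < V_cut / 2}"
proof -
  have B: "0 \<le> B" using f(2)[of undefined] by linarith
  define a where "a = (\<integral> x. exp (- l * g1.V x) * f x \<partial>M)"
  define b where "b = (\<integral> x. exp (- l * g2.V x) * f x \<partial>M)"
  have "\<bar>a - b\<bar> \<le> B * exp (- l * V_cut)"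
    unfolding a_def b_def
  proof (rule g1.abs_integral_diff_le[OF g1.integrable_exp_V_mult[OF l f] g2.integrable_exp_V_mult[OF l f]])
    fix x
    have "\<bar>exp (- l * g1.V x) * f x - exp (- l * g2.V x) * f x\<bar>
        = \<bar>exp (- l * g1.V x) - exp (- l * g2.V x)\<bar> * \<bar>f x\<bar>"
      by (simp add: abs_mult[symmetric] left_diff_distrib)
    also have "\<dots> \<le> exp (- l * V_cut) * B"
      using abs_exp_V_diff_le[OF l, of x] f(2)[of x] by (intro mult_mono) auto
    finally show "\<bar>exp (- l * g1.V x) * f x - exp (- l * g2.V x) * f x\<bar> \<le> B * exp (- l * V_cut)"
      by (simp add: mult.commute)
  qed
  moreover have "\<bar>g1.Z l - g2.Z l\<bar> \<le> exp (- l * V_cut)"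
    unfolding g1.Z_def g2.Z_def using abs_exp_V_diff_le[OF l] l
    by (intro g1.abs_integral_diff_le g1.integrable_exp_V g2.integrable_exp_V)
  moreover have "\<bar>b\<bar> \<le> B * g2.Z l"
    unfolding b_def by (rule g2.abs_integral_exp_V_mult_le[OF l f])
  ultimately have "\<bar>a / g1.Z l - b / g2.Z l\<bar> \<le> 2 * B * exp (- l * V_cut) / g1.Z l"
    using g1.Z_pos[OF l] g2.Z_pos[OF l] B by (intro abs_divide_diff_divide_le)
  also have "\<dots> = 2 * B * (exp (- l * V_cut) / g1.Z l)" by simp
  also have "\<dots> \<le> 2 * B * (exp (- l * V_cut / 2) / measure M {x. g1.V x < V_cut / 2})"
    using g1.exp_divide_Z_le[OF l V_cut_pos] B by (intro mult_left_mono) auto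
  finally show ?thesis
    unfolding a_def b_def g1.integral_gibbs_eq_divide[OF l f(1)] g2.integral_gibbs_eq_divide[OF l f(1)]
    by (simp only: times_divide_eq_right)
qed

lemma weak_conv_gibbs_transfer:
  assumes "weak_conv_filter g1.gibbs \<mu> at_top"
  shows "weak_conv_filter g2.gibbs \<mu> at_top"
  unfolding weak_conv_filter_def
proof (intro allI impI)
  fix f :: "'a \<Rightarrow> real" assume f: "continuous_on UNIV f \<and> bounded (range f)"
  then obtain B where B: "\<And>x. \<bar>f x\<bar> \<le> B" by (auto simp: bounded_iff)
  have f_measurable: "f \<in> borel_measurable M"
    using f by (intro g1.measurable_from_borel borel_measurable_continuous_onI) auto
  define p where "p = measure M {x. g1.V x < V_cut / 2}"
  have "((\<lambda>l. (\<integral> x. f x \<partial>g1.gibbs l) - (\<integral> x. f x \<partial>g2.gibbs l)) \<longlongrightarrow> 0) at_top"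
  proof (rule Lim_null_comparison)
    show "\<forall>\<^sub>F l in at_top.
        norm ((\<integral> x. f x \<partial>g1.gibbs l) - (\<integral> x. f x \<partial>g2.gibbs l)) \<le> 2 * B * exp (- l * V_cut / 2) / p"
      using eventually_ge_at_top[of "0::real"]
    proof eventually_elim
      case (elim l)
      show ?case using abs_integral_gibbs_diff_le[OF elim f_measurable B] by (simp only: p_def real_norm_def)
    qed
    show "((\<lambda>l. 2 * B * exp (- l * V_cut / 2) / p) \<longlongrightarrow> 0) at_top"
      using V_cut_pos by (intro tendsto_divide_zero) real_asymp
  qed
  moreover have "((\<lambda>l. \<integral> x. f x \<partial>g1.gibbs l) \<longlongrightarrow> \<integral> x. f x \<partial>\<mu>) at_top"
    using assms f by (simp add: weak_conv_filter_def)
  ultimately show "((\<lambda>l. \<integral> x. f x \<partial>g2.gibbs l) \<longlongrightarrow> \<integral> x. f x \<partial>\<mu>) at_top"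
    using tendsto_diff by fastforce
qed

end

lemma not_maxent_posterior_empty:
  assumes "0 < r"
  shows "\<not> maxent_posterior \<nu> {} r \<mu>"
proof
  assume "maxent_posterior \<nu> {} r \<mu>"
  then have "\<exists>!m. maxent_minimizer \<nu> {} r (r / 2) m"
    using assms by (simp add: maxent_posterior_def)
  then obtain m where "maxent_minimizer \<nu> {} r (r / 2) m" by blast
  then have "prob_space m" "(\<integral> x. (trunc_dist r {} x)\<^sup>2 \<partial>m) \<le> (r / 2)\<^sup>2"
    by (auto simp: maxent_minimizer_def maxent_feasible_def borel_prob_def)
  then show False
    using assms by (simp add: trunc_dist_def prob_space.prob_space power_divide)
qed

theorem proposition3p6:
  fixes \<nu> \<mu> :: "'a::metric_space measure" and A :: "'a set"
    and \<epsilon> R R' :: real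
  assumes "\<epsilon> > 0" and "R > \<epsilon>" and "R' > \<epsilon>"
    and "standard_borel_space TYPE('a)"
    and "radon_prob \<nu>"
    and "closed A" and "A \<subseteq> Supp \<nu>"
    and "maxent_posterior \<nu> A R \<mu>"
  shows "maxent_posterior \<nu> A R' \<mu>"
proof -
  have "prob_space \<nu>" "sets \<nu> = sets borel"
    using \<open>radon_prob \<nu>\<close> by (auto simp: radon_prob_def borel_prob_def)
  moreover have "A \<noteq> {}"
    using not_maxent_posterior_empty[of R \<nu> \<mu>] assms by auto
  ultimately interpret maxent_gibbs_pair \<nu> R R' A
    using assms unfolding maxent_gibbs_pair_def maxent_gibbs_def maxent_gibbs_axioms_def by auto
  show ?thesis
    using \<open>maxent_posterior \<nu> A R \<mu>\<close> weak_conv_gibbs_transfer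
    unfolding g1.maxent_posterior_iff_gibbs_limit g2.maxent_posterior_iff_gibbs_limit by blast
qed

end
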